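(* There exists a regular monoid $M$ such that all its Schützenberger groups (equivalently, all its maximal subgroups) are residually finite, and its right action on its $\mathcal{L}$-classes and its left action on its $\mathcal{R}$-classes are residually finite, but $M$ itself is not residually finite.
   Context: A monoid $M$ is regular if for every $x$ there is $y$ with $xyx=x$. Residual finiteness of a monoid: distinct elements are separated by homomorphisms to finite monoids. Green's relations: $x\mathcal{R}y$ iff $xM=yM$, $x\mathcal{L}y$ iff $Mx=My$, $\mathcal{H}=\mathcal{R}\cap\mathcal{L}$. $M$ acts on the right on $M/\mathcal{L}$ by $L_x\cdot m=L_{xm}$ and on the left on $M/\mathcal{R}$ by $m\cdot R_x=R_{mx}$; an action is residually finite if any two distinct points are separated by an action homomorphism onto an action on a finite set. For an $\mathcal{H}$-class $H$, $\mathrm{Stab}(H)=\{s\in M:Hs=H\}$, $\sigma=\{(x,y):hx=hy\ \forall h\in H\}$, and the Schützenberger group is $\Gamma(H)=\mathrm{Stab}(H)/\sigma$. *)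

theory Defs
  imports "HOL-Algebra.Group"
begin

definition mon_hom :: "('a, 'c) monoid_scheme \<Rightarrow> ('b, 'd) monoid_scheme \<Rightarrow> ('a \<Rightarrow> 'b) set" where
  "mon_hom M N = {h. h \<in> carrier M \<rightarrow> carrier N \<and>
     (\<forall>x\<in>carrier M. \<forall>y\<in>carrier M. h (x \<otimes>\<^bsub>M\<^esub> y) = h x \<otimes>\<^bsub>N\<^esub> h y) \<and>
     h \<one>\<^bsub>M\<^esub> = \<one>\<^bsub>N\<^esub>}"

definition regular_monoid :: "('a, 'c) monoid_scheme \<Rightarrow> bool" where
  "regular_monoid M \<longleftrightarrow>
     (\<forall>x\<in>carrier M. \<exists>y\<in>carrier M. x \<otimes>\<^bsub>M\<^esub> y \<otimes>\<^bsub>M\<^esub> x = x)"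

(* Residual finiteness of a monoid: distinct elements are separated by
   homomorphisms to finite monoids (finite monoids are taken, up to isomorphism,
   with carrier a subset of nat). *)
definition res_finite_monoid :: "('a, 'c) monoid_scheme \<Rightarrow> bool" where
  "res_finite_monoid M \<longleftrightarrow>
     (\<forall>x\<in>carrier M. \<forall>y\<in>carrier M. x \<noteq> y \<longrightarrow>
        (\<exists>(N :: nat monoid) h. monoid N \<and> finite (carrier N) \<and>
            h \<in> mon_hom M N \<and> h x \<noteq> h y))"

definition res_finite_group :: "('a, 'c) monoid_scheme \<Rightarrow> bool" where
  "res_finite_group G \<longleftrightarrow>
     (\<forall>x\<in>carrier G. \<forall>y\<in>carrier G. x \<noteq> y \<longrightarrow>
        (\<exists>(K :: nat monoid) h. group K \<and> finite (carrier K) \<and>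
            h \<in> hom G K \<and> h x \<noteq> h y))"

definition Rcl :: "('a, 'c) monoid_scheme \<Rightarrow> 'a \<Rightarrow> 'a set" where
  "Rcl M x = {y \<in> carrier M. (\<lambda>m. y \<otimes>\<^bsub>M\<^esub> m) ` carrier M = (\<lambda>m. x \<otimes>\<^bsub>M\<^esub> m) ` carrier M}"

definition Lcl :: "('a, 'c) monoid_scheme \<Rightarrow> 'a \<Rightarrow> 'a set" where
  "Lcl M x = {y \<in> carrier M. (\<lambda>m. m \<otimes>\<^bsub>M\<^esub> y) ` carrier M = (\<lambda>m. m \<otimes>\<^bsub>M\<^esub> x) ` carrier M}"

definition Hcl :: "('a, 'c) monoid_scheme \<Rightarrow> 'a \<Rightarrow> 'a set" where
  "Hcl M x = Rcl M x \<inter> Lcl M x"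

definition Lact :: "('a, 'c) monoid_scheme \<Rightarrow> 'a set \<Rightarrow> 'a \<Rightarrow> 'a set" where
  "Lact M L m = Lcl M ((SOME x. x \<in> L) \<otimes>\<^bsub>M\<^esub> m)"

definition Ract :: "('a, 'c) monoid_scheme \<Rightarrow> 'a \<Rightarrow> 'a set \<Rightarrow> 'a set" where
  "Ract M m R = Rcl M (m \<otimes>\<^bsub>M\<^esub> (SOME x. x \<in> R))"

(* A right action (X, act) of M on a set X is residually finite if any two distinct
   points are separated by an action homomorphism onto a right action of M
   on a finite set (finite sets taken as subsets of nat). *)
definition res_finite_right_action ::
    "('a, 'c) monoid_scheme \<Rightarrow> 'x set \<Rightarrow> ('x \<Rightarrow> 'a \<Rightarrow> 'x) \<Rightarrow> bool" where
  "res_finite_right_action M X act \<longleftrightarrow>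
     (\<forall>p\<in>X. \<forall>q\<in>X. p \<noteq> q \<longrightarrow>
        (\<exists>(Y :: nat set) (b :: nat \<Rightarrow> 'a \<Rightarrow> nat) (\<phi> :: 'x \<Rightarrow> nat).
           finite Y \<and>
           (\<forall>y\<in>Y. \<forall>m\<in>carrier M. b y m \<in> Y) \<and>
           (\<forall>y\<in>Y. b y \<one>\<^bsub>M\<^esub> = y) \<and>
           (\<forall>y\<in>Y. \<forall>m\<in>carrier M. \<forall>n\<in>carrier M. b (b y m) n = b y (m \<otimes>\<^bsub>M\<^esub> n)) \<and>
           \<phi> ` X = Y \<and>
           (\<forall>x\<in>X. \<forall>m\<in>carrier M. \<phi> (act x m) = b (\<phi> x) m) \<and>
           \<phi> p \<noteq> \<phi> q))"

definition res_finite_left_action ::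
    "('a, 'c) monoid_scheme \<Rightarrow> 'x set \<Rightarrow> ('a \<Rightarrow> 'x \<Rightarrow> 'x) \<Rightarrow> bool" where
  "res_finite_left_action M X act \<longleftrightarrow>
     (\<forall>p\<in>X. \<forall>q\<in>X. p \<noteq> q \<longrightarrow>
        (\<exists>(Y :: nat set) (b :: 'a \<Rightarrow> nat \<Rightarrow> nat) (\<phi> :: 'x \<Rightarrow> nat).
           finite Y \<and>
           (\<forall>y\<in>Y. \<forall>m\<in>carrier M. b m y \<in> Y) \<and>
           (\<forall>y\<in>Y. b \<one>\<^bsub>M\<^esub> y = y) \<and>
           (\<forall>y\<in>Y. \<forall>m\<in>carrier M. \<forall>n\<in>carrier M. b m (b n y) = b (m \<otimes>\<^bsub>M\<^esub> n) y) \<and>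
           \<phi> ` X = Y \<and>
           (\<forall>x\<in>X. \<forall>m\<in>carrier M. \<phi> (act m x) = b m (\<phi> x)) \<and>
           \<phi> p \<noteq> \<phi> q))"

definition Stab :: "('a, 'c) monoid_scheme \<Rightarrow> 'a set \<Rightarrow> 'a set" where
  "Stab M H = {s \<in> carrier M. (\<lambda>h. h \<otimes>\<^bsub>M\<^esub> s) ` H = H}"

definition sigmaH :: "('a, 'c) monoid_scheme \<Rightarrow> 'a set \<Rightarrow> ('a \<times> 'a) set" where
  "sigmaH M H = {(x, y). x \<in> Stab M H \<and> y \<in> Stab M H \<and>
                         (\<forall>h\<in>H. h \<otimes>\<^bsub>M\<^esub> x = h \<otimes>\<^bsub>M\<^esub> y)}"

definition Schutz :: "('a, 'c) monoid_scheme \<Rightarrow> 'a set \<Rightarrow> 'a set monoid" where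
  "Schutz M H = \<lparr> carrier = Stab M H // sigmaH M H,
      mult = (\<lambda>A B. sigmaH M H `` {(SOME a. a \<in> A) \<otimes>\<^bsub>M\<^esub> (SOME b. b \<in> B)}),
      one = sigmaH M H `` {\<one>\<^bsub>M\<^esub>} \<rparr>"

end

theory Submission
  imports Defs "HOL-Library.Nat_Bijection"
begin

(* The counterexample is the Rees matrix semigroup over the two-element group Z2 with
   index sets N x N and sandwich matrix P(l, i) = [l = i], with an identity 1 adjoined:
   its non-identity elements are triples (i, g, l) multiplied by
       (i, g, l) (i', g', l') = (i, g + [l = i'] + g', l').
   It is regular; apart from {1}, its R-classes are the rows (fixed i) and its L-classes the
   columns (fixed l).  A non-identity element m maps every L-class onto L_m (dually for
   R-classes), so any two Green classes are separated by an action on three points.  Every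
   Schuetzenberger group embeds into Z2 via a multiplicative "shift" character.  But the
   monoid is not residually finite: a finite quotient identifies two of the infinitely many
   elements (0, 0, a), (0, 0, c), and right multiplication by (a, 0, 0) sends them to the
   distinct elements (0, 1, 0) and (0, 0, 0). *)


section \<open>General criteria\<close>

lemma Lact_representative:
  assumes "L \<in> Lcl M ` carrier M"
  obtains z where "z \<in> carrier M" "Lcl M z = L" "\<And>m. Lact M L m = Lcl M (z \<otimes>\<^bsub>M\<^esub> m)"
proof -
  obtain w where w: "w \<in> carrier M" "L = Lcl M w" using assms by blast
  then have "w \<in> L" by (simp add: Lcl_def)
  then have z: "(SOME z. z \<in> L) \<in> L" by (rule someI)
  show ?thesis
    by (rule that[of "SOME z. z \<in> L"]) (use z w in \<open>auto simp: Lcl_def Lact_def\<close>)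
qed

lemma Ract_representative:
  assumes "R \<in> Rcl M ` carrier M"
  obtains z where "z \<in> carrier M" "Rcl M z = R" "\<And>m. Ract M m R = Rcl M (m \<otimes>\<^bsub>M\<^esub> z)"
proof -
  obtain w where w: "w \<in> carrier M" "R = Rcl M w" using assms by blast
  then have "w \<in> R" by (simp add: Rcl_def)
  then have z: "(SOME z. z \<in> R) \<in> R" by (rule someI)
  show ?thesis
    by (rule that[of "SOME z. z \<in> R"]) (use z w in \<open>auto simp: Rcl_def Ract_def\<close>)
qed

(* If every non-identity m sends every L-class to L_m, and the non-identity elements form a
   left ideal, then two distinct L-classes are separated by the action on three points
   p, q, "rest", where a non-identity m acts as the constant map onto the image of L_m. *)
lemma res_finite_right_action_collapsing:
  fixes M :: "('a, 'c) monoid_scheme"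
  assumes "monoid M"
    and collapse: "\<And>z m. z \<in> carrier M \<Longrightarrow> m \<in> carrier M \<Longrightarrow> m \<noteq> \<one>\<^bsub>M\<^esub> \<Longrightarrow>
                    Lcl M (z \<otimes>\<^bsub>M\<^esub> m) = Lcl M m"
    and ideal: "\<And>m n. m \<in> carrier M \<Longrightarrow> n \<in> carrier M \<Longrightarrow> n \<noteq> \<one>\<^bsub>M\<^esub> \<Longrightarrow>
                  m \<otimes>\<^bsub>M\<^esub> n \<noteq> \<one>\<^bsub>M\<^esub>"
  shows "res_finite_right_action M (Lcl M ` carrier M) (Lact M)"
  unfolding res_finite_right_action_def
proof (intro ballI impI)
  let ?X = "Lcl M ` carrier M"
  fix p q assume pq: "p \<in> ?X" "q \<in> ?X" "p \<noteq> q"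
  define \<phi> where "\<phi> L = (if L = p then 0 else if L = q then 1 else (2::nat))" for L
  define b where "b y m = (if m = \<one>\<^bsub>M\<^esub> then y else \<phi> (Lcl M m))" for y m
  have equivariant: "\<phi> (Lact M L m) = b (\<phi> L) m" if L: "L \<in> ?X" and m: "m \<in> carrier M" for L m
  proof -
    obtain z where "z \<in> carrier M" "Lcl M z = L" "Lact M L m = Lcl M (z \<otimes>\<^bsub>M\<^esub> m)"
      using Lact_representative[OF L] by metis
    then show ?thesis
      using m collapse \<open>monoid M\<close> by (cases "m = \<one>\<^bsub>M\<^esub>") (simp_all add: b_def monoid.r_one)
  qed
  have closed: "\<forall>y\<in>\<phi> ` ?X. \<forall>m\<in>carrier M. b y m \<in> \<phi> ` ?X"
    by (auto simp: b_def)
  have unit: "\<forall>y\<in>\<phi> ` ?X. b y \<one>\<^bsub>M\<^esub> = y"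
    by (simp add: b_def)
  have compose: "\<forall>y\<in>\<phi> ` ?X. \<forall>m\<in>carrier M. \<forall>n\<in>carrier M. b (b y m) n = b y (m \<otimes>\<^bsub>M\<^esub> n)"
    using \<open>monoid M\<close> collapse ideal by (simp add: b_def monoid.r_one)
  have separate: "\<phi> p \<noteq> \<phi> q"
    using pq by (simp add: \<phi>_def)
  have "finite (\<phi> ` ?X)"
    by (rule finite_subset[of _ "{0, 1, 2}"]) (auto simp: \<phi>_def)
  with closed unit compose equivariant separate
  show "\<exists>(Y :: nat set) b \<phi>. finite Y \<and>
       (\<forall>y\<in>Y. \<forall>m\<in>carrier M. b y m \<in> Y) \<and> (\<forall>y\<in>Y. b y \<one>\<^bsub>M\<^esub> = y) \<and>
       (\<forall>y\<in>Y. \<forall>m\<in>carrier M. \<forall>n\<in>carrier M. b (b y m) n = b y (m \<otimes>\<^bsub>M\<^esub> n)) \<and>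
       \<phi> ` ?X = Y \<and> (\<forall>L\<in>?X. \<forall>m\<in>carrier M. \<phi> (Lact M L m) = b (\<phi> L) m) \<and> \<phi> p \<noteq> \<phi> q"
    by (intro exI[of _ "\<phi> ` ?X"] exI[of _ b] exI[of _ \<phi>] conjI) (assumption | rule refl | blast)+
qed

lemma res_finite_left_action_collapsing:
  fixes M :: "('a, 'c) monoid_scheme"
  assumes "monoid M"
    and collapse: "\<And>z m. z \<in> carrier M \<Longrightarrow> m \<in> carrier M \<Longrightarrow> m \<noteq> \<one>\<^bsub>M\<^esub> \<Longrightarrow>
                    Rcl M (m \<otimes>\<^bsub>M\<^esub> z) = Rcl M m"
    and ideal: "\<And>m n. m \<in> carrier M \<Longrightarrow> n \<in> carrier M \<Longrightarrow> m \<noteq> \<one>\<^bsub>M\<^esub> \<Longrightarrow>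
                  m \<otimes>\<^bsub>M\<^esub> n \<noteq> \<one>\<^bsub>M\<^esub>"
  shows "res_finite_left_action M (Rcl M ` carrier M) (Ract M)"
  unfolding res_finite_left_action_def
proof (intro ballI impI)
  let ?X = "Rcl M ` carrier M"
  fix p q assume pq: "p \<in> ?X" "q \<in> ?X" "p \<noteq> q"
  define \<phi> where "\<phi> R = (if R = p then 0 else if R = q then 1 else (2::nat))" for R
  define b where "b m y = (if m = \<one>\<^bsub>M\<^esub> then y else \<phi> (Rcl M m))" for m y
  have equivariant: "\<phi> (Ract M m R) = b m (\<phi> R)" if R: "R \<in> ?X" and m: "m \<in> carrier M" for R m
  proof -
    obtain z where "z \<in> carrier M" "Rcl M z = R" "Ract M m R = Rcl M (m \<otimes>\<^bsub>M\<^esub> z)"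
      using Ract_representative[OF R] by metis
    then show ?thesis
      using m collapse \<open>monoid M\<close> by (cases "m = \<one>\<^bsub>M\<^esub>") (simp_all add: b_def monoid.l_one)
  qed
  have closed: "\<forall>y\<in>\<phi> ` ?X. \<forall>m\<in>carrier M. b m y \<in> \<phi> ` ?X"
    by (auto simp: b_def)
  have unit: "\<forall>y\<in>\<phi> ` ?X. b \<one>\<^bsub>M\<^esub> y = y"
    by (simp add: b_def)
  have compose: "\<forall>y\<in>\<phi> ` ?X. \<forall>m\<in>carrier M. \<forall>n\<in>carrier M. b m (b n y) = b (m \<otimes>\<^bsub>M\<^esub> n) y"
    using \<open>monoid M\<close> collapse ideal by (simp add: b_def monoid.l_one)
  have separate: "\<phi> p \<noteq> \<phi> q"
    using pq by (simp add: \<phi>_def)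
  have "finite (\<phi> ` ?X)"
    by (rule finite_subset[of _ "{0, 1, 2}"]) (auto simp: \<phi>_def)
  with closed unit compose equivariant separate
  show "\<exists>(Y :: nat set) b \<phi>. finite Y \<and>
       (\<forall>y\<in>Y. \<forall>m\<in>carrier M. b m y \<in> Y) \<and> (\<forall>y\<in>Y. b \<one>\<^bsub>M\<^esub> y = y) \<and>
       (\<forall>y\<in>Y. \<forall>m\<in>carrier M. \<forall>n\<in>carrier M. b m (b n y) = b (m \<otimes>\<^bsub>M\<^esub> n) y) \<and>
       \<phi> ` ?X = Y \<and> (\<forall>R\<in>?X. \<forall>m\<in>carrier M. \<phi> (Ract M m R) = b m (\<phi> R)) \<and> \<phi> p \<noteq> \<phi> q"
    by (intro exI[of _ "\<phi> ` ?X"] exI[of _ b] exI[of _ \<phi>] conjI) (assumption | rule refl | blast)+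
qed

lemma Stab_mult_closed:
  assumes "monoid M" "H \<subseteq> carrier M" "a \<in> Stab M H" "b \<in> Stab M H"
  shows "a \<otimes>\<^bsub>M\<^esub> b \<in> Stab M H"
proof -
  have "(\<lambda>h. h \<otimes>\<^bsub>M\<^esub> (a \<otimes>\<^bsub>M\<^esub> b)) ` H = (\<lambda>h. h \<otimes>\<^bsub>M\<^esub> b) ` ((\<lambda>h. h \<otimes>\<^bsub>M\<^esub> a) ` H)"
    unfolding image_image using assms by (intro image_cong) (auto simp: Stab_def monoid.m_assoc)
  also have "\<dots> = H" using assms(3,4) by (simp add: Stab_def)
  finally show ?thesis using assms by (simp add: Stab_def monoid.m_closed)
qed

lemma sigmaH_class_fibre:
  assumes f_sigma: "\<And>a b. a \<in> Stab M H \<Longrightarrow> b \<in> Stab M H \<Longrightarrow>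
                    (a, b) \<in> sigmaH M H \<longleftrightarrow> f a = f b"
    and "a \<in> Stab M H"
  shows "sigmaH M H `` {a} = {b \<in> Stab M H. f b = f a}"
proof -
  have "(a, b) \<in> sigmaH M H \<longleftrightarrow> b \<in> Stab M H \<and> f b = f a" for b
    using f_sigma[OF assms(2), of b] unfolding sigmaH_def by auto
  then show ?thesis by auto
qed

(* A faithful character of the Schuetzenberger group: if a multiplicative map f from
   Stab(H) to a finite group K identifies exactly the sigma-related pairs, then f induces
   an injective homomorphism Schutz M H -> K, so the Schuetzenberger group is residually
   finite. *)
lemma res_finite_group_Schutz_character:
  fixes M :: "('a, 'c) monoid_scheme" and K :: "nat monoid" and f :: "'a \<Rightarrow> nat"
  assumes "monoid M" "H \<subseteq> carrier M" "group K" "finite (carrier K)"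
    and f_carrier: "\<And>a. a \<in> Stab M H \<Longrightarrow> f a \<in> carrier K"
    and f_mult: "\<And>a b. a \<in> Stab M H \<Longrightarrow> b \<in> Stab M H \<Longrightarrow>
                   f (a \<otimes>\<^bsub>M\<^esub> b) = f a \<otimes>\<^bsub>K\<^esub> f b"
    and f_sigma: "\<And>a b. a \<in> Stab M H \<Longrightarrow> b \<in> Stab M H \<Longrightarrow>
                    (a, b) \<in> sigmaH M H \<longleftrightarrow> f a = f b"
  shows "res_finite_group (Schutz M H)"
proof -
  let ?G = "Schutz M H" and ?S = "Stab M H" and ?\<sigma> = "sigmaH M H"
  define fibre where "fibre a = {b \<in> ?S. f b = f a}" for a
  have fibre_class: "?\<sigma> `` {a} = fibre a" if "a \<in> ?S" for a
    using sigmaH_class_fibre[OF f_sigma that] by (simp add: fibre_def)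
  have carrier: "C \<in> carrier ?G \<longleftrightarrow> (\<exists>a\<in>?S. C = fibre a)" for C
    by (auto simp: Schutz_def quotient_def fibre_class)
  define \<chi> where "\<chi> C = f (SOME a. a \<in> C)" for C
  have pick: "(SOME a. a \<in> C) \<in> ?S \<and> \<chi> C = f a" if "a \<in> ?S" "C = fibre a" for a C
  proof -
    have "a \<in> C" using that by (simp add: fibre_def)
    then have "(SOME b. b \<in> C) \<in> C" by (rule someI)
    then show ?thesis using that by (simp add: fibre_def \<chi>_def)
  qed
  have representative: "(SOME a. a \<in> C) \<in> ?S" if "C \<in> carrier ?G" for C
    using that pick unfolding carrier by blast
  have hom: "\<chi> \<in> hom ?G K"
  proof (rule homI)
    fix C assume "C \<in> carrier ?G"
    then show "\<chi> C \<in> carrier K" using representative f_carrier by (simp add: \<chi>_def)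
  next
    fix A B assume "A \<in> carrier ?G" "B \<in> carrier ?G"
    define a b where "a = (SOME a. a \<in> A)" and "b = (SOME b. b \<in> B)"
    have S: "a \<in> ?S" "b \<in> ?S"
      using representative a_def b_def \<open>A \<in> carrier ?G\<close> \<open>B \<in> carrier ?G\<close> by blast+
    then have ab: "a \<otimes>\<^bsub>M\<^esub> b \<in> ?S" by (rule Stab_mult_closed[OF assms(1,2)])
    have "A \<otimes>\<^bsub>?G\<^esub> B = fibre (a \<otimes>\<^bsub>M\<^esub> b)"
      using fibre_class[OF ab] by (simp add: Schutz_def a_def b_def)
    then have "\<chi> (A \<otimes>\<^bsub>?G\<^esub> B) = f (a \<otimes>\<^bsub>M\<^esub> b)" using pick[OF ab] by blast
    then show "\<chi> (A \<otimes>\<^bsub>?G\<^esub> B) = \<chi> A \<otimes>\<^bsub>K\<^esub> \<chi> B"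
      using S f_mult by (simp add: \<chi>_def a_def b_def)
  qed
  have injective: "A = B" if A: "A \<in> carrier ?G" and B: "B \<in> carrier ?G"
    and eq: "\<chi> A = \<chi> B" for A B
  proof -
    obtain a where a: "a \<in> ?S" "A = fibre a" using A unfolding carrier by blast
    obtain b where b: "b \<in> ?S" "B = fibre b" using B unfolding carrier by blast
    have "f a = f b" using eq pick[OF a] pick[OF b] by simp
    then show "A = B" using a b by (simp add: fibre_def)
  qed
  then have "\<forall>A\<in>carrier ?G. \<forall>B\<in>carrier ?G. A \<noteq> B \<longrightarrow> \<chi> A \<noteq> \<chi> B" by blast
  then show ?thesis
    unfolding res_finite_group_def using assms(3,4) hom by blast
qed

(* A monoid is not residually finite if it contains distinct x, y and an infinite family
   e such that any two members e a, e c can be "pinched" onto x and y by a common right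
   factor: a finite quotient must identify some e a with e c, hence x with y. *)
lemma not_res_finite_monoid_pinching:
  fixes M :: "('a, 'c) monoid_scheme" and e :: "nat \<Rightarrow> 'a"
  assumes "x \<in> carrier M" "y \<in> carrier M" "x \<noteq> y"
    and e: "\<And>n. e n \<in> carrier M"
    and pinch: "\<And>a c. a \<noteq> c \<Longrightarrow> \<exists>u\<in>carrier M. e a \<otimes>\<^bsub>M\<^esub> u = x \<and> e c \<otimes>\<^bsub>M\<^esub> u = y"
  shows "\<not> res_finite_monoid M"
proof
  assume "res_finite_monoid M"
  then obtain N :: "nat monoid" and h where N: "finite (carrier N)" and h: "h \<in> mon_hom M N"
      and separates: "h x \<noteq> h y"
    using assms(1-3) unfolding res_finite_monoid_def by blast
  have h_mult: "h (m \<otimes>\<^bsub>M\<^esub> n) = h m \<otimes>\<^bsub>N\<^esub> h n" if "m \<in> carrier M" "n \<in> carrier M" for m n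
    using h that by (simp add: mon_hom_def)
  have "range (h \<circ> e) \<subseteq> carrier N" using h e by (auto simp: mon_hom_def)
  then have "\<not> inj (h \<circ> e)"
    using N finite_subset finite_imageD infinite_UNIV_nat by blast
  then obtain a c where "a \<noteq> c" "h (e a) = h (e c)" unfolding inj_def by auto
  moreover obtain u where "u \<in> carrier M" "e a \<otimes>\<^bsub>M\<^esub> u = x" "e c \<otimes>\<^bsub>M\<^esub> u = y"
    using pinch[OF \<open>a \<noteq> c\<close>] by blast
  ultimately have "h x = h y" using h_mult e by metis
  then show False using separates by contradiction
qed


(* Encoding of the triples (i, g, l): the identity is 0, the triple is a positive number. *)
definition code :: "nat \<Rightarrow> bool \<Rightarrow> nat \<Rightarrow> nat" where
  "code i g l = Suc (2 * prod_encode (i, l) + of_bool g)"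

definition row :: "nat \<Rightarrow> nat" where "row n = fst (prod_decode ((n - 1) div 2))"
definition col :: "nat \<Rightarrow> nat" where "col n = snd (prod_decode ((n - 1) div 2))"
definition parity :: "nat \<Rightarrow> bool" where "parity n = odd (n - 1)"

lemma code_components [simp]:
  "row (code i g l) = i" "col (code i g l) = l" "parity (code i g l) = g" "0 < code i g l"
  by (simp_all add: code_def row_def col_def parity_def)

lemma code_row_col: "n \<noteq> 0 \<Longrightarrow> code (row n) (parity n) (col n) = n"
  by (simp add: code_def row_def col_def parity_def) presburger

(* The Rees matrix product with sandwich entry [l = i'], Z2 written as bool under xor. *)
definition rmul :: "nat \<Rightarrow> nat \<Rightarrow> nat" where
  "rmul x y = (if x = 0 then y else if y = 0 then x else
     code (row x) ((parity x \<noteq> parity y) \<noteq> (col x = row y)) (col y))"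

lemma rmul_identity [simp]: "rmul 0 y = y" "rmul x 0 = x"
  by (simp_all add: rmul_def)

lemma rmul_nonzero:
  assumes "x \<noteq> 0" "y \<noteq> 0"
  shows "rmul x y = code (row x) ((parity x \<noteq> parity y) \<noteq> (col x = row y)) (col y)"
  using assms by (simp add: rmul_def)

lemma rmul_eq_0_iff [simp]: "rmul x y = 0 \<longleftrightarrow> x = 0 \<and> y = 0"
  by (simp add: rmul_def code_def)

lemma rmul_pos_iff [simp]: "0 < rmul x y \<longleftrightarrow> 0 < x \<or> 0 < y"
  by (simp add: rmul_def)

lemma row_rmul [simp]: "x \<noteq> 0 \<Longrightarrow> row (rmul x y) = row x"
  by (simp add: rmul_def)

lemma col_rmul [simp]: "y \<noteq> 0 \<Longrightarrow> col (rmul x y) = col y"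
  by (simp add: rmul_def)

lemma rmul_assoc: "rmul (rmul x y) z = rmul x (rmul y z)"
proof (cases "x = 0 \<or> y = 0 \<or> z = 0")
  case True
  then show ?thesis by auto
next
  case False
  have "(((parity x \<noteq> parity y) \<noteq> (col x = row y)) \<noteq> parity z) \<noteq> (col y = row z) \<longleftrightarrow>
        (parity x \<noteq> ((parity y \<noteq> parity z) \<noteq> (col y = row z))) \<noteq> (col x = row y)"
    by blast
  with False show ?thesis by (simp add: rmul_nonzero)
qed

definition RM :: "nat monoid" where "RM = \<lparr>carrier = UNIV, mult = rmul, one = 0\<rparr>"

lemma RM_simps [simp]: "carrier RM = UNIV" "mult RM = rmul" "one RM = 0"
  by (simp_all add: RM_def)

lemma monoid_RM: "monoid RM"
  by (rule monoidI) (auto simp: rmul_assoc)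

(* (i, g, l) (l, g, i) (i, g, l) = (i, g, l). *)
lemma regular_RM: "regular_monoid RM"
  unfolding regular_monoid_def
proof
  fix x :: nat
  have "rmul (rmul x (code (col x) (parity x) (row x))) x = x" if "x \<noteq> 0"
    using that code_row_col[OF that] by (simp add: rmul_nonzero)
  then show "\<exists>y\<in>carrier RM. x \<otimes>\<^bsub>RM\<^esub> y \<otimes>\<^bsub>RM\<^esub> x = x"
    by (cases "x = 0") auto
qed


section \<open>Green's relations of the monoid\<close>

lemma right_ideal_RM: "range (rmul x) = (if x = 0 then UNIV else {v. v \<noteq> 0 \<and> row v = row x})"
proof (cases "x = 0")
  case False
  have "v \<in> range (rmul x)" if "v \<noteq> 0" "row v = row x" for v
  proof
    have "(parity x = (parity x = parity v)) = parity v" by blast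
    then show "v = rmul x (code (col x) (parity x = parity v) (col v))"
      using that False code_row_col[of v] by (simp add: rmul_nonzero)
  qed simp
  with False show ?thesis by auto
qed simp

lemma left_ideal_RM: "range (\<lambda>m. rmul m x) = (if x = 0 then UNIV else {v. v \<noteq> 0 \<and> col v = col x})"
proof (cases "x = 0")
  case False
  have "v \<in> range (\<lambda>m. rmul m x)" if "v \<noteq> 0" "col v = col x" for v
  proof
    have "((parity v = parity x) = parity x) = parity v" by blast
    then show "v = rmul (code (row v) (parity v = parity x) (row x)) x"
      using that False code_row_col[of v] by (simp add: rmul_nonzero)
  qed simp
  with False show ?thesis by auto
qed simp

lemma Rcl_RM: "Rcl RM x = (if x = 0 then {0} else {z. z \<noteq> 0 \<and> row z = row x})"
  by (auto simp: Rcl_def right_ideal_RM set_eq_iff)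

lemma Lcl_RM: "Lcl RM x = (if x = 0 then {0} else {z. z \<noteq> 0 \<and> col z = col x})"
  by (auto simp: Lcl_def left_ideal_RM set_eq_iff)

lemma Hcl_RM: "Hcl RM x = (if x = 0 then {0} else {z. z \<noteq> 0 \<and> row z = row x \<and> col z = col x})"
  by (auto simp: Hcl_def Rcl_RM Lcl_RM)

(* Non-identity elements collapse the Green classes, so both actions are residually finite. *)
lemma right_action_RM: "res_finite_right_action RM (Lcl RM ` carrier RM) (Lact RM)"
  by (rule res_finite_right_action_collapsing) (auto simp: monoid_RM Lcl_RM)

lemma left_action_RM: "res_finite_left_action RM (Rcl RM ` carrier RM) (Ract RM)"
  by (rule res_finite_left_action_collapsing) (auto simp: monoid_RM Rcl_RM)


section \<open>Schuetzenberger groups\<close>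

(* The stabiliser of the H-class in column l: the identity and the column l. *)
definition stab_RM :: "nat \<Rightarrow> nat set" where "stab_RM l = {s. s = 0 \<or> col s = l}"

(* The Z2-value by which s shifts the group coordinate of an element of column l. *)
definition shift :: "nat \<Rightarrow> nat \<Rightarrow> bool" where
  "shift l s = (s \<noteq> 0 \<and> (parity s \<noteq> (l = row s)))"

lemma rmul_H_class:
  assumes "h \<noteq> 0" "s \<in> stab_RM (col h)"
  shows "rmul h s = code (row h) (parity h \<noteq> shift (col h) s) (col h)"
proof (cases "s = 0")
  case True
  then show ?thesis using assms code_row_col[of h] by (simp add: shift_def)
next
  case False
  have "((parity h \<noteq> parity s) \<noteq> (col h = row s)) = (parity h \<noteq> (parity s \<noteq> (col h = row s)))"
    by blast
  then show ?thesis using assms False by (simp add: stab_RM_def shift_def rmul_nonzero)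
qed

lemma shift_mult:
  assumes "a \<in> stab_RM l" "b \<in> stab_RM l"
  shows "rmul a b \<in> stab_RM l \<and> shift l (rmul a b) = (shift l a \<noteq> shift l b)"
proof (cases "a = 0 \<or> b = 0")
  case True
  then show ?thesis using assms by (elim disjE) (simp_all add: shift_def)
next
  case False
  then have "col a = l" "col b = l" using assms by (auto simp: stab_RM_def)
  moreover have "(((parity a \<noteq> parity b) \<noteq> (l = row b)) \<noteq> (l = row a)) =
                 ((parity a \<noteq> (l = row a)) \<noteq> (parity b \<noteq> (l = row b)))"
    by blast
  ultimately show ?thesis using False by (simp add: stab_RM_def shift_def rmul_nonzero)
qed

lemma Stab_RM:
  assumes "x \<noteq> 0"
  shows "Stab RM (Hcl RM x) = stab_RM (col x)"
proof (intro equalityI subsetI)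
  fix s assume "s \<in> Stab RM (Hcl RM x)"
  then have "(\<lambda>h. rmul h s) ` Hcl RM x = Hcl RM x" by (simp add: Stab_def)
  moreover have "code (row x) False (col x) \<in> Hcl RM x" using assms by (simp add: Hcl_RM)
  ultimately have "rmul (code (row x) False (col x)) s \<in> Hcl RM x" by blast
  then show "s \<in> stab_RM (col x)"
    using assms by (cases "s = 0") (auto simp: Hcl_RM stab_RM_def)
next
  fix s assume s: "s \<in> stab_RM (col x)"
  have "z \<in> (\<lambda>h. rmul h s) ` Hcl RM x" if "z \<in> Hcl RM x" for z
  proof
    have "((parity z \<noteq> shift (col x) s) \<noteq> shift (col x) s) = parity z" by blast
    then show "z = rmul (code (row x) (parity z \<noteq> shift (col x) s) (col x)) s"
      using that s assms code_row_col[of z] by (auto simp: Hcl_RM rmul_H_class)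
  qed (use assms in \<open>simp add: Hcl_RM\<close>)
  then show "s \<in> Stab RM (Hcl RM x)"
    using s assms by (auto simp: Stab_def Hcl_RM rmul_H_class)
qed

lemma sigmaH_RM:
  assumes "x \<noteq> 0" "a \<in> stab_RM (col x)" "b \<in> stab_RM (col x)"
  shows "(a, b) \<in> sigmaH RM (Hcl RM x) \<longleftrightarrow> shift (col x) a = shift (col x) b"
proof
  let ?h = "code (row x) False (col x)"
  assume "(a, b) \<in> sigmaH RM (Hcl RM x)"
  moreover have "?h \<in> Hcl RM x" using assms(1) by (simp add: Hcl_RM)
  ultimately have "parity (rmul ?h a) = parity (rmul ?h b)" unfolding sigmaH_def by auto
  then show "shift (col x) a = shift (col x) b"
    using assms by (simp add: rmul_H_class)
next
  assume "shift (col x) a = shift (col x) b"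
  then show "(a, b) \<in> sigmaH RM (Hcl RM x)"
    unfolding sigmaH_def Stab_RM[OF assms(1)] using assms by (auto simp: Hcl_RM rmul_H_class)
qed

definition Z2 :: "nat monoid" where
  "Z2 = \<lparr>carrier = {0, 1}, mult = (\<lambda>a b. (a + b) mod 2), one = 0\<rparr>"

lemma group_Z2: "group Z2"
  by (rule groupI) (auto simp: Z2_def)

lemma of_bool_xor: "of_bool (p \<noteq> q) = (of_bool p + of_bool q) mod (2::nat)"
  by (cases p; cases q) simp_all

lemma Stab_RM_identity: "Stab RM (Hcl RM 0) = {0}"
  by (auto simp: Stab_def Hcl_RM)

lemma Schutz_RM: "res_finite_group (Schutz RM (Hcl RM x))"
proof (rule res_finite_group_Schutz_character[where K = Z2 and f = "\<lambda>s. of_bool (shift (col x) s)"])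
  show "monoid RM" "Hcl RM x \<subseteq> carrier RM" "group Z2" "finite (carrier Z2)"
    by (simp_all add: monoid_RM group_Z2) (simp add: Z2_def)
  show "of_bool (shift (col x) a) \<in> carrier Z2" for a by (simp add: Z2_def)
  have stab: "Stab RM (Hcl RM x) \<subseteq> stab_RM (col x)"
    by (cases "x = 0") (simp_all add: Stab_RM Stab_RM_identity stab_RM_def)
  show "of_bool (shift (col x) (a \<otimes>\<^bsub>RM\<^esub> b)) =
        of_bool (shift (col x) a) \<otimes>\<^bsub>Z2\<^esub> of_bool (shift (col x) b)"
    if "a \<in> Stab RM (Hcl RM x)" "b \<in> Stab RM (Hcl RM x)" for a b
  proof -
    have "shift (col x) (rmul a b) = (shift (col x) a \<noteq> shift (col x) b)"
      using that stab shift_mult by blast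
    then show ?thesis by (simp add: Z2_def of_bool_xor)
  qed
  show "(a, b) \<in> sigmaH RM (Hcl RM x) \<longleftrightarrow> of_bool (shift (col x) a) = of_bool (shift (col x) b)"
    if "a \<in> Stab RM (Hcl RM x)" "b \<in> Stab RM (Hcl RM x)" for a b
  proof (cases "x = 0")
    case True
    then show ?thesis using that by (auto simp: Stab_RM_identity sigmaH_def)
  next
    case False
    then show ?thesis using that by (simp add: Stab_RM sigmaH_RM)
  qed
qed


section \<open>Failure of residual finiteness\<close>

(* (0, 0, a) (a, 0, 0) = (0, 1, 0) while (0, 0, c) (a, 0, 0) = (0, 0, 0) for c \<noteq> a. *)
lemma not_res_finite_RM: "\<not> res_finite_monoid RM"
proof (rule not_res_finite_monoid_pinching[where e = "\<lambda>n. code 0 False n"])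
  show "code 0 True 0 \<noteq> code 0 False 0" by (metis code_components(3))
  show "\<exists>u\<in>carrier RM. code 0 False a \<otimes>\<^bsub>RM\<^esub> u = code 0 True 0 \<and>
                       code 0 False c \<otimes>\<^bsub>RM\<^esub> u = code 0 False 0" if "a \<noteq> c" for a c
    using that by (intro bexI[of _ "code a False 0"]) (auto simp: rmul_nonzero)
qed simp_all


theorem mainTheorem7:
  shows "\<exists>M :: nat monoid. monoid M \<and> regular_monoid M \<and>
     (\<forall>x\<in>carrier M. res_finite_group (Schutz M (Hcl M x))) \<and>
     res_finite_right_action M (Lcl M ` carrier M) (Lact M) \<and>
     res_finite_left_action M (Rcl M ` carrier M) (Ract M) \<and>
     \<not> res_finite_monoid M"
proof (intro exI[of _ RM] conjI ballI)
  show "monoid RM" by (rule monoid_RM)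
  show "regular_monoid RM" by (rule regular_RM)
  show "res_finite_group (Schutz RM (Hcl RM x))" for x by (rule Schutz_RM)
  show "res_finite_right_action RM (Lcl RM ` carrier RM) (Lact RM)" by (rule right_action_RM)
  show "res_finite_left_action RM (Rcl RM ` carrier RM) (Ract RM)" by (rule left_action_RM)
  show "\<not> res_finite_monoid RM" by (rule not_res_finite_RM)
qed

end
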